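(* Let $(m_n)$ be a sequence of positive integers and let $V_n$ and $U_n$ be linear subspaces of $GF(2)^{m_n}$ with $U_n\subseteq V_n$ for every $n$. If the sequence $(U_n)$ has a uniform weight spectrum, then the sequence $(V_n)$ has a uniform weight spectrum.
   Context: The weight ${\rm wt}(x)$ of $x\in GF(2)^m$ is the number of nonzero coordinates; for $W\subseteq GF(2)^m$, $\mathcal{A}_i(W)=\{x\in W:{\rm wt}(x)=i\}$. For a linear subspace $V\subseteq GF(2)^m$ let $\alpha(V)=\max_{i,\,x}\frac{|\mathcal{A}_i(V+x)|}{|V|}$, the maximum over all $i\in\{0,\dots,m\}$ and $x\in GF(2)^m$. A sequence of subspaces $V_n\subseteq GF(2)^{m_n}$ has a uniform weight spectrum if $\alpha(V_n)\to 0$ as $n\to\infty$. *)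

theory Defs
  imports Complex_Main
begin

text \<open>Vectors of GF(2)^m are represented as functions nat => bool that vanish
  (are False) outside of {..<m}; True represents the field element 1.\<close>

definition gf2_vecs :: "nat \<Rightarrow> (nat \<Rightarrow> bool) set" where
  "gf2_vecs m = {x. \<forall>i. m \<le> i \<longrightarrow> \<not> x i}"

definition gf2_zero :: "nat \<Rightarrow> bool" where
  "gf2_zero = (\<lambda>i. False)"

definition gf2_add :: "(nat \<Rightarrow> bool) \<Rightarrow> (nat \<Rightarrow> bool) \<Rightarrow> (nat \<Rightarrow> bool)" where
  "gf2_add x y = (\<lambda>i. x i \<noteq> y i)"

definition wt :: "nat \<Rightarrow> (nat \<Rightarrow> bool) \<Rightarrow> nat" where
  "wt m x = card {i. i < m \<and> x i}"

text \<open>Linear subspace of GF(2)^m: contains 0 and is closed under addition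
  (scalar multiplication over GF(2) is trivial).\<close>
definition gf2_subspace :: "nat \<Rightarrow> (nat \<Rightarrow> bool) set \<Rightarrow> bool" where
  "gf2_subspace m V \<longleftrightarrow> V \<subseteq> gf2_vecs m \<and> gf2_zero \<in> V \<and>
     (\<forall>x\<in>V. \<forall>y\<in>V. gf2_add x y \<in> V)"

text \<open>A_i(V + x) has the same cardinality as {v in V. wt(v+x) = i}.\<close>
definition weight_class :: "nat \<Rightarrow> (nat \<Rightarrow> bool) set \<Rightarrow> (nat \<Rightarrow> bool) \<Rightarrow> nat \<Rightarrow> (nat \<Rightarrow> bool) set" where
  "weight_class m V x i = {y \<in> (\<lambda>v. gf2_add v x) ` V. wt m y = i}"

definition alpha :: "nat \<Rightarrow> (nat \<Rightarrow> bool) set \<Rightarrow> real" where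
  "alpha m V = Max {real (card (weight_class m V x i)) / real (card V) | i x.
                      i \<le> m \<and> x \<in> gf2_vecs m}"

definition uniform_weight_spectrum :: "(nat \<Rightarrow> nat) \<Rightarrow> (nat \<Rightarrow> (nat \<Rightarrow> bool) set) \<Rightarrow> bool" where
  "uniform_weight_spectrum m V \<longleftrightarrow> (\<lambda>n. alpha (m n) (V n)) \<longlonglongrightarrow> 0"

end

theory Submission
  imports Defs
begin

text \<open>It suffices that \<open>alpha m V \<le> alpha m U\<close> whenever U \<subseteq> V. A coset V + x is a
  disjoint union of cosets of U, each meeting a weight class in at most \<open>alpha m U * card U\<close>
  points. Instead of counting these cosets, double count the pairs (u, v) \<in> U \<times> V with
  \<open>wt (u + v + x) = i\<close>: for fixed u they number \<open>card (A\<^sub>i(V + x))\<close>, because u + V = V,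
  and for fixed v at most \<open>alpha m U * card U\<close>.\<close>

lemma finite_gf2_vecs: "finite (gf2_vecs m)"
proof -
  have "gf2_vecs m \<subseteq> (\<lambda>S i. i \<in> S) ` Pow {..<m}"
  proof
    fix x assume "x \<in> gf2_vecs m"
    then have "x = (\<lambda>i. i \<in> {i. i < m \<and> x i})"
      by (auto simp: gf2_vecs_def not_less[symmetric])
    then show "x \<in> (\<lambda>S i. i \<in> S) ` Pow {..<m}" by blast
  qed
  then show ?thesis by (rule finite_subset) auto
qed

lemma gf2_zero_in_vecs: "gf2_zero \<in> gf2_vecs m"
  by (simp add: gf2_vecs_def gf2_zero_def)

lemma gf2_add_in_vecs: "x \<in> gf2_vecs m \<Longrightarrow> y \<in> gf2_vecs m \<Longrightarrow> gf2_add x y \<in> gf2_vecs m"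
  by (auto simp: gf2_vecs_def gf2_add_def)

lemma gf2_add_left_commute: "gf2_add u (gf2_add v x) = gf2_add v (gf2_add u x)"
  by (auto simp: gf2_add_def)

lemma gf2_add_assoc: "gf2_add (gf2_add u v) x = gf2_add u (gf2_add v x)"
  by (auto simp: gf2_add_def)

lemma inj_gf2_add_right: "inj (\<lambda>v. gf2_add v x)"
  by (rule injI) (auto simp: gf2_add_def fun_eq_iff)

lemma gf2_subspace_finite: "gf2_subspace m V \<Longrightarrow> finite V"
  using finite_gf2_vecs finite_subset unfolding gf2_subspace_def by blast

lemma gf2_subspace_card_pos: "gf2_subspace m V \<Longrightarrow> 0 < card V"
  using gf2_subspace_finite unfolding gf2_subspace_def by (auto simp: card_gt_0_iff)

lemma gf2_subspace_add_in_vecs: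
  "gf2_subspace m V \<Longrightarrow> v \<in> V \<Longrightarrow> x \<in> gf2_vecs m \<Longrightarrow> gf2_add v x \<in> gf2_vecs m"
  unfolding gf2_subspace_def using gf2_add_in_vecs by blast

lemma coset_translate:
  assumes "gf2_subspace m V" and "u \<in> V"
  shows "(\<lambda>v. gf2_add v (gf2_add u x)) ` V = (\<lambda>v. gf2_add v x) ` V"
proof -
  have closed: "gf2_add v u \<in> V" if "v \<in> V" for v
    using assms that unfolding gf2_subspace_def by blast
  show ?thesis
  proof (intro equalityI image_subsetI)
    fix v assume "v \<in> V"
    then show "gf2_add v (gf2_add u x) \<in> (\<lambda>v. gf2_add v x) ` V"
      using closed by (auto simp: gf2_add_assoc[symmetric])
  next
    fix v assume "v \<in> V"
    have "gf2_add v x = gf2_add (gf2_add v u) (gf2_add u x)"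
      by (auto simp: gf2_add_def)
    then show "gf2_add v x \<in> (\<lambda>v. gf2_add v (gf2_add u x)) ` V"
      using closed[OF \<open>v \<in> V\<close>] by blast
  qed
qed

lemma weight_class_translate:
  "gf2_subspace m V \<Longrightarrow> u \<in> V \<Longrightarrow> weight_class m V (gf2_add u x) i = weight_class m V x i"
  unfolding weight_class_def by (simp add: coset_translate)

lemma card_weight_class_eq_sum:
  assumes "finite V"
  shows "card (weight_class m V x i) = (\<Sum>v\<in>V. of_bool (wt m (gf2_add v x) = i))"
proof -
  have "weight_class m V x i = (\<lambda>v. gf2_add v x) ` (V \<inter> {v. wt m (gf2_add v x) = i})"
    by (auto simp: weight_class_def)
  then have "card (weight_class m V x i) = card (V \<inter> {v. wt m (gf2_add v x) = i})"
    by (simp add: card_image inj_on_subset[OF inj_gf2_add_right])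
  then show ?thesis using assms by simp
qed

lemma sum_card_weight_class_swap:
  assumes "finite U" and "finite V"
  shows "(\<Sum>u\<in>U. card (weight_class m V (gf2_add u x) i))
       = (\<Sum>v\<in>V. card (weight_class m U (gf2_add v x) i))"
  using assms by (simp add: card_weight_class_eq_sum sum.swap[of _ U] gf2_add_left_commute
      del: sum_of_bool_eq)

lemma finite_alpha_ratios:
  "finite {real (card (weight_class m V x i)) / real (card V) | i x. i \<le> m \<and> x \<in> gf2_vecs m}"
  by (rule finite_image_set2) (use finite_gf2_vecs in auto)

lemma alpha_ge_ratio:
  "i \<le> m \<Longrightarrow> x \<in> gf2_vecs m \<Longrightarrow>
    real (card (weight_class m V x i)) / real (card V) \<le> alpha m V"
  unfolding alpha_def by (rule Max_ge[OF finite_alpha_ratios]) blast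

lemma alpha_nonneg: "0 \<le> alpha m V"
  using alpha_ge_ratio[OF le0 gf2_zero_in_vecs] by (rule order_trans[rotated]) simp

lemma card_weight_class_le_alpha:
  assumes "gf2_subspace m V" and "x \<in> gf2_vecs m" and "i \<le> m"
  shows "real (card (weight_class m V x i)) \<le> alpha m V * card V"
  using alpha_ge_ratio[OF assms(3,2), of V] gf2_subspace_card_pos[OF assms(1)]
  by (simp add: field_simps)

lemma card_weight_class_le_alpha_subspace:
  assumes U: "gf2_subspace m U" and V: "gf2_subspace m V" and "U \<subseteq> V"
    and x: "x \<in> gf2_vecs m" and i: "i \<le> m"
  shows "real (card (weight_class m V x i)) \<le> alpha m U * card V"
proof -
  have "card U * real (card (weight_class m V x i))
      = (\<Sum>u\<in>U. real (card (weight_class m V (gf2_add u x) i)))"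
    using \<open>U \<subseteq> V\<close> by (simp add: weight_class_translate[OF V] subset_iff)
  also have "\<dots> = (\<Sum>v\<in>V. real (card (weight_class m U (gf2_add v x) i)))"
    using arg_cong[OF sum_card_weight_class_swap[OF gf2_subspace_finite gf2_subspace_finite,
          OF U V], of real] by simp
  also have "\<dots> \<le> (\<Sum>v\<in>V. alpha m U * card U)"
    by (intro sum_mono card_weight_class_le_alpha[OF U _ i] gf2_subspace_add_in_vecs[OF V _ x])
  also have "\<dots> = card U * (alpha m U * card V)"
    by simp
  finally show ?thesis
    using gf2_subspace_card_pos[OF U] by simp
qed

lemma alpha_superspace_le:
  assumes "gf2_subspace m U" and "gf2_subspace m V" and "U \<subseteq> V"
  shows "alpha m V \<le> alpha m U"
  unfolding alpha_def[of m V]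
proof (rule Max.boundedI[OF finite_alpha_ratios])
  show "{real (card (weight_class m V x i)) / real (card V) | i x.
          i \<le> m \<and> x \<in> gf2_vecs m} \<noteq> {}"
    using gf2_zero_in_vecs by blast
next
  fix r assume "r \<in> {real (card (weight_class m V x i)) / real (card V) | i x.
                        i \<le> m \<and> x \<in> gf2_vecs m}"
  then obtain i x where "i \<le> m" "x \<in> gf2_vecs m"
    and r: "r = real (card (weight_class m V x i)) / real (card V)" by blast
  then have "real (card (weight_class m V x i)) \<le> alpha m U * card V"
    using card_weight_class_le_alpha_subspace[OF assms] by blast
  then show "r \<le> alpha m U"
    using r gf2_subspace_card_pos[OF assms(2)] by (simp add: pos_divide_le_eq)
qed

theorem proposition2:
  fixes m :: "nat \<Rightarrow> nat"
    and U V :: "nat \<Rightarrow> (nat \<Rightarrow> bool) set"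
  assumes "\<And>n. 0 < m n"
    and "\<And>n. gf2_subspace (m n) (V n)"
    and "\<And>n. gf2_subspace (m n) (U n)"
    and "\<And>n. U n \<subseteq> V n"
    and "uniform_weight_spectrum m U"
  shows "uniform_weight_spectrum m V"
  unfolding uniform_weight_spectrum_def
proof (rule tendsto_sandwich[of "\<lambda>_. 0" _ _ "\<lambda>n. alpha (m n) (U n)"])
  show "\<forall>\<^sub>F n in sequentially. 0 \<le> alpha (m n) (V n)"
    by (simp add: alpha_nonneg)
  show "\<forall>\<^sub>F n in sequentially. alpha (m n) (V n) \<le> alpha (m n) (U n)"
    using alpha_superspace_le assms(2-4) by simp
  show "(\<lambda>n. alpha (m n) (U n)) \<longlonglongrightarrow> 0"
    using assms(5) unfolding uniform_weight_spectrum_def .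
qed simp

end
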